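(* Let $X$ be a set and let $\mathcal{L}$ be a nest on $X$ satisfying condition (C3). Then $\mathcal{T}_{\mathcal{L}}=\mathcal{T}_l$.
   Context: A nest on $X$ is a family $\mathcal{L}$ of subsets of $X$ such that for all $M,N\in\mathcal{L}$, either $M\subseteq N$ or $N\subseteq M$. Define $x\triangleleft_{\mathcal{L}} y$ iff there exists $L\in\mathcal{L}$ with $x\in L$ and $y\notin L$, and $x\trianglelefteq_{\mathcal{L}} y$ iff $x=y$ or $x\triangleleft_{\mathcal{L}} y$. Suprema are taken with respect to $\trianglelefteq_{\mathcal{L}}$. Condition (C2): for each $L\in\mathcal{L}$, $\sup L$ exists in $X$ and $\sup L\in X-L$. Condition (C3): for each $x\in X$ there exists $L\in\mathcal{L}$ such that $\sup L = x$ and $x\in X-L$, and moreover (C2) holds. $\mathcal{T}_{\mathcal{L}}$ is the topology on $X$ generated by $\mathcal{L}$ as a subbase. For $k\in X$ let ${\uparrow}k=\{y\in X : k\trianglelefteq_{\mathcal{L}} y\}$; the lower topology $\mathcal{T}_l$ is the topology generated by the subbase $\{X-{\uparrow}k : k\in X\}$. *)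

theory Defs
  imports "HOL-Analysis.Analysis"
begin

definition nest_on :: "'a set \<Rightarrow> 'a set set \<Rightarrow> bool" where
  "nest_on X \<L> \<longleftrightarrow> (\<forall>L\<in>\<L>. L \<subseteq> X) \<and> (\<forall>M\<in>\<L>. \<forall>N\<in>\<L>. M \<subseteq> N \<or> N \<subseteq> M)"

definition nest_less :: "'a set set \<Rightarrow> 'a \<Rightarrow> 'a \<Rightarrow> bool" where
  "nest_less \<L> x y \<longleftrightarrow> (\<exists>L\<in>\<L>. x \<in> L \<and> y \<notin> L)"

definition nest_le :: "'a set set \<Rightarrow> 'a \<Rightarrow> 'a \<Rightarrow> bool" where
  "nest_le \<L> x y \<longleftrightarrow> x = y \<or> nest_less \<L> x y"

definition is_nest_sup :: "'a set \<Rightarrow> 'a set set \<Rightarrow> 'a set \<Rightarrow> 'a \<Rightarrow> bool" where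
  "is_nest_sup X \<L> A s \<longleftrightarrow> s \<in> X \<and> (\<forall>a\<in>A. nest_le \<L> a s) \<and>
     (\<forall>u\<in>X. (\<forall>a\<in>A. nest_le \<L> a u) \<longrightarrow> nest_le \<L> s u)"

definition cond_C2 :: "'a set \<Rightarrow> 'a set set \<Rightarrow> bool" where
  "cond_C2 X \<L> \<longleftrightarrow> (\<forall>L\<in>\<L>. \<exists>s. is_nest_sup X \<L> L s \<and> s \<in> X - L)"

definition cond_C3 :: "'a set \<Rightarrow> 'a set set \<Rightarrow> bool" where
  "cond_C3 X \<L> \<longleftrightarrow> (\<forall>x\<in>X. \<exists>L\<in>\<L>. is_nest_sup X \<L> L x \<and> x \<in> X - L) \<and> cond_C2 X \<L>"

definition subbase_topology :: "'a set \<Rightarrow> 'a set set \<Rightarrow> 'a topology" where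
  "subbase_topology X S = topology (arbitrary union_of (finite intersection_of (\<lambda>U. U \<in> S) relative_to X))"

definition nest_up :: "'a set \<Rightarrow> 'a set set \<Rightarrow> 'a \<Rightarrow> 'a set" where
  "nest_up X \<L> k = {y\<in>X. nest_le \<L> k y}"

definition lower_topology :: "'a set \<Rightarrow> 'a set set \<Rightarrow> 'a topology" where
  "lower_topology X \<L> = subbase_topology X {X - nest_up X \<L> k | k. k \<in> X}"

end

theory Submission
  imports Defs
begin

text \<open>Under (C3) every point k is the supremum of some L \<in> \<L> with k \<notin> L, and every L \<in> \<L>
  has such a supremum. For such a pair, X - \<up>k = L: points outside L lie above all of L and
  hence above k, while points of L lie strictly below k. So the two subbases coincide.\<close>

lemma nest_less_imp_not_nest_le:
  assumes "nest_on X \<L>" and "nest_less \<L> x y"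
  shows "\<not> nest_le \<L> y x"
  using assms unfolding nest_on_def nest_le_def nest_less_def by blast

lemma diff_nest_up_eq_if_sup:
  assumes nest: "nest_on X \<L>" and sup: "is_nest_sup X \<L> A k"
    and A: "A \<in> \<L>" and "k \<notin> A"
  shows "X - nest_up X \<L> k = A"
proof
  show "X - nest_up X \<L> k \<subseteq> A"
  proof
    fix y assume y: "y \<in> X - nest_up X \<L> k"
    show "y \<in> A"
    proof (rule ccontr)
      assume "y \<notin> A"
      with A have "\<forall>a\<in>A. nest_le \<L> a y"
        unfolding nest_le_def nest_less_def by blast
      with sup y have "nest_le \<L> k y"
        unfolding is_nest_sup_def by blast
      with y show False
        unfolding nest_up_def by blast
    qed
  qed
next
  show "A \<subseteq> X - nest_up X \<L> k"
  proof
    fix y assume y: "y \<in> A"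
    with nest A have "y \<in> X"
      unfolding nest_on_def by blast
    moreover have "nest_le \<L> y k"
      using sup y unfolding is_nest_sup_def by blast
    with y \<open>k \<notin> A\<close> have "nest_less \<L> y k"
      unfolding nest_le_def by auto
    then have "\<not> nest_le \<L> k y"
      by (rule nest_less_imp_not_nest_le[OF nest])
    ultimately show "y \<in> X - nest_up X \<L> k"
      unfolding nest_up_def by blast
  qed
qed

lemma lower_subbase_eq_nest:
  assumes nest: "nest_on X \<L>" and C3: "cond_C3 X \<L>"
  shows "{X - nest_up X \<L> k | k. k \<in> X} = \<L>"
proof
  show "{X - nest_up X \<L> k | k. k \<in> X} \<subseteq> \<L>"
  proof
    fix U assume "U \<in> {X - nest_up X \<L> k | k. k \<in> X}"
    then obtain k where "k \<in> X" and U: "U = X - nest_up X \<L> k"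
      by blast
    with C3 obtain L where "L \<in> \<L>" "is_nest_sup X \<L> L k" "k \<notin> L"
      unfolding cond_C3_def by blast
    with U show "U \<in> \<L>"
      using diff_nest_up_eq_if_sup[OF nest] by simp
  qed
next
  show "\<L> \<subseteq> {X - nest_up X \<L> k | k. k \<in> X}"
  proof
    fix L assume L: "L \<in> \<L>"
    with C3 obtain s where "is_nest_sup X \<L> L s" "s \<in> X - L"
      unfolding cond_C3_def cond_C2_def by blast
    with L show "L \<in> {X - nest_up X \<L> k | k. k \<in> X}"
      using diff_nest_up_eq_if_sup[OF nest] by blast
  qed
qed

theorem theorem3p1:
  fixes X :: "'a set" and \<L> :: "'a set set"
  assumes "nest_on X \<L>" and "cond_C3 X \<L>"
  shows "subbase_topology X \<L> = lower_topology X \<L>"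
  unfolding lower_topology_def lower_subbase_eq_nest[OF assms] ..

end
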